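(* Let $p(x,y)$ be a real polynomial with $p(0,0)=0$, $\nabla p(0,0)=(0,0)$, $\dim\operatorname{Co}N_p=2$, such that for every $A\in\mathbb{N}^2$ the main $A$-quasi-homogeneous form of $p$ is nonnegative on $\mathbb{R}^2$. Suppose $\mathcal{A}_p\neq\emptyset$ and that for every $A\in\mathcal{A}_p$ at least one of the conditions $(C2)_A$, $(\tilde C2)_A$ holds. Then $(0,0)$ is a point of local minimum of $p$.
   Context: $\mathbb{N}=\{1,2,\dots\}$; $\mathbb{N}_0^2$ is the set of $(A_1,A_2)\in\mathbb{N}^2$ with $\gcd(A_1,A_2)=1$. $N_p$ is the support of $p$ and $\operatorname{Co}N_p$ its convex hull. For $A\in\mathbb{N}^2$ the main $A$-quasi-homogeneous form of $p$ is the sum of the terms of $p$ whose exponent vectors $k$ minimize $\langle A,k\rangle$ over $N_p$. For $A\in\mathbb{N}_0^2$, with $B_1^A<\dots<B_{r_A}^A$ the distinct values of $\langle A,k\rangle$ on $N_p$, $\varphi_i^A$ is the sum of terms of $p$ with $\langle A,k\rangle=B_i^A$ ($\varphi_i^A:=0$ for $i>r_A$). The characteristic polynomial of $\varphi_1^A=\sum_ia_ix^{\alpha_i}y^{\beta_i}$ ($a_i\ne0$, $\alpha_1>\alpha_2>\dots$) is $g_1^A(u)=\sum_ia_iu^{(\alpha_1-\alpha_i)/A_2}$. $\mathcal{A}_p$ is the set of $A\in\mathbb{N}_0^2$ such that $\varphi_1^A$ has at least three terms, $g_1^A\ge0$ on $\mathbb{R}$, and $g_1^A$ has a real root. $H_\varphi=\{(x,y):\varphi(x,y)=0\}$.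 Condition $(C2)_A$: for all $(x,y)\in H_{\varphi_1^A}$ with $x\ne0,y\ne0$, $\varphi_2^A(x,y)>0$. Condition $(\tilde C2)_A$: for all $(x,y)\in H_{\varphi_1^A}\cap H_{\varphi_2^A}$ with $x\neq0$, $y\neq0$, $\varphi_3^A(x,y)>0$, and $\varphi_2^A(x,y)\ge0$ for all $(x,y)\in\mathbb{R}^2$. Local minimum at $(0,0)$ means $p\ge p(0,0)$ near $(0,0)$. *)

theory Defs
  imports "HOL-Analysis.Analysis"
begin

text \<open>A real polynomial in two variables is represented by its coefficient function
  c :: nat \<times> nat \<Rightarrow> real, with finite support; the coefficient of x^a y^b is c (a,b).\<close>

definition is_bipoly :: "(nat \<times> nat \<Rightarrow> real) \<Rightarrow> bool" where
  "is_bipoly c \<longleftrightarrow> finite {k. c k \<noteq> 0}"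

definition supp2 :: "(nat \<times> nat \<Rightarrow> real) \<Rightarrow> (nat \<times> nat) set" where
  "supp2 c = {k. c k \<noteq> 0}"

definition peval :: "(nat \<times> nat \<Rightarrow> real) \<Rightarrow> real \<Rightarrow> real \<Rightarrow> real" where
  "peval c x y = (\<Sum>k\<in>supp2 c. c k * x ^ fst k * y ^ snd k)"

definition supp_real :: "(nat \<times> nat \<Rightarrow> real) \<Rightarrow> (real \<times> real) set" where
  "supp_real c = (\<lambda>k. (real (fst k), real (snd k))) ` supp2 c"

definition wdeg :: "nat \<times> nat \<Rightarrow> nat \<times> nat \<Rightarrow> nat" where
  "wdeg A k = fst A * fst k + snd A * snd k"

definition main_form :: "(nat \<times> nat \<Rightarrow> real) \<Rightarrow> nat \<times> nat \<Rightarrow> (nat \<times> nat \<Rightarrow> real)" where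
  "main_form c A = (\<lambda>k. if k \<in> supp2 c \<and> (\<forall>k'\<in>supp2 c. wdeg A k \<le> wdeg A k') then c k else 0)"

definition wvals :: "(nat \<times> nat \<Rightarrow> real) \<Rightarrow> nat \<times> nat \<Rightarrow> nat set" where
  "wvals c A = wdeg A ` supp2 c"

text \<open>\<phi>_i^A (i \<ge> 1); zero for i > r_A.\<close>
definition phi :: "(nat \<times> nat \<Rightarrow> real) \<Rightarrow> nat \<times> nat \<Rightarrow> nat \<Rightarrow> (nat \<times> nat \<Rightarrow> real)" where
  "phi c A i = (\<lambda>k. if 1 \<le> i \<and> i \<le> card (wvals c A) \<and> k \<in> supp2 c
                        \<and> wdeg A k = sorted_list_of_set (wvals c A) ! (i - 1)
                     then c k else 0)"

definition char_poly :: "(nat \<times> nat \<Rightarrow> real) \<Rightarrow> nat \<times> nat \<Rightarrow> real \<Rightarrow> real" where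
  "char_poly c A u =
     (let f = phi c A 1; \<alpha>1 = Max (fst ` supp2 f)
      in (\<Sum>k\<in>supp2 f. f k * u ^ ((\<alpha>1 - fst k) div snd A)))"

definition N0sq :: "(nat \<times> nat) set" where
  "N0sq = {A. fst A \<ge> 1 \<and> snd A \<ge> 1 \<and> coprime (fst A) (snd A)}"

definition calA :: "(nat \<times> nat \<Rightarrow> real) \<Rightarrow> (nat \<times> nat) set" where
  "calA c = {A \<in> N0sq. card (supp2 (phi c A 1)) \<ge> 3
                \<and> (\<forall>u. char_poly c A u \<ge> 0) \<and> (\<exists>u. char_poly c A u = 0)}"

definition C2 :: "(nat \<times> nat \<Rightarrow> real) \<Rightarrow> nat \<times> nat \<Rightarrow> bool" where
  "C2 c A \<longleftrightarrow> (\<forall>x y. peval (phi c A 1) x y = 0 \<and> x \<noteq> 0 \<and> y \<noteq> 0 \<longrightarrow> peval (phi c A 2) x y > 0)"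

definition C2tilde :: "(nat \<times> nat \<Rightarrow> real) \<Rightarrow> nat \<times> nat \<Rightarrow> bool" where
  "C2tilde c A \<longleftrightarrow>
     (\<forall>x y. peval (phi c A 1) x y = 0 \<and> peval (phi c A 2) x y = 0 \<and> x \<noteq> 0 \<and> y \<noteq> 0
              \<longrightarrow> peval (phi c A 3) x y > 0)
     \<and> (\<forall>x y. peval (phi c A 2) x y \<ge> 0)"

end

theory Submission
  imports Defs
begin

(*
  Suppose p(x_n, y_n) < 0 along a sequence tending to the origin.  On an axis, the lowest
  monomial of p on that axis is isolated by a suitable main form and dominates.  Off the axes write
  |x_n| = exp(-s_n), |y_n| = exp(-t_n) and pass to a subsequence along which s_n / (s_n + t_n)
  converges to some w.  If the weight (w, 1 - w) is minimised on N_p at a single vertex, the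
  corresponding monomial dominates p, and it is positive off the axes because a nearby integer
  weight makes it the main form.  Otherwise w = A_1 / (A_1 + A_2) for the coprime normal A of an
  edge.  If A_1 t_n - A_2 s_n is unbounded, an endpoint of the edge dominates in the same way.  If
  it stays bounded, then (x_n, y_n) = (xi_n l_n^A_1, eta_n l_n^A_2) with l_n -> 0 and
  (xi_n, eta_n) -> (a, b), ab <> 0, and p(x_n, y_n) = sum_i l_n^B_i phi_i^A(xi_n, eta_n).  If
  phi_1^A(a, b) = 0 then A lies in calA, and (C2) or (C2~) yields a level i0 with phi_i0^A(a, b) > 0
  such that all lower levels are nonnegative; hence p(x_n, y_n) > 0 eventually.
*)

section \<open>Supports, levels and main forms\<close>

lemma is_bipoly_finite_supp2: "is_bipoly c \<Longrightarrow> finite (supp2 c)"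
  by (simp add: is_bipoly_def supp2_def)

lemma peval_zero [simp]: "peval (\<lambda>_. 0) x y = 0"
  by (simp add: peval_def supp2_def)

lemma tendsto_peval:
  "X \<longlonglongrightarrow> a \<Longrightarrow> Y \<longlonglongrightarrow> b \<Longrightarrow> (\<lambda>n. peval d (X n) (Y n)) \<longlonglongrightarrow> peval d a b"
  unfolding peval_def by (intro tendsto_intros)

lemma phi_on_supp2: "k \<in> supp2 (phi c A i) \<Longrightarrow> phi c A i k = c k"
  by (auto simp: phi_def supp2_def split: if_split_asm)

lemma phi_eq_zero: "card (wvals c A) < i \<Longrightarrow> phi c A i = (\<lambda>_. 0)"
  by (auto simp: phi_def)

lemma peval_phi:
  assumes "1 \<le> i" "i \<le> card (wvals c A)"
  shows "peval (phi c A i) x y =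
    (\<Sum>k | k \<in> supp2 c \<and> wdeg A k = sorted_list_of_set (wvals c A) ! (i - 1). c k * x ^ fst k * y ^ snd k)"
proof -
  have "supp2 (phi c A i) = {k. k \<in> supp2 c \<and> wdeg A k = sorted_list_of_set (wvals c A) ! (i - 1)}"
    using assms by (auto simp: supp2_def phi_def)
  then show ?thesis
    unfolding peval_def by (intro sum.cong) (use assms in \<open>auto simp: phi_def\<close>)
qed

lemma phi_one_eq_main_form:
  assumes "finite (supp2 c)"
  shows "phi c A 1 = main_form c A"
proof
  fix k
  let ?W = "wvals c A"
  show "phi c A 1 k = main_form c A k"
  proof (cases "k \<in> supp2 c")
    case True
    then have W: "finite ?W" "wdeg A k \<in> ?W"
      using assms by (auto simp: wvals_def)
    then have "sorted_list_of_set ?W ! 0 = Min ?W"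
      by (subst sorted_list_of_set_nonempty) auto
    moreover have "1 \<le> card ?W"
      using W by (metis One_nat_def Suc_leI card_gt_0_iff empty_iff)
    moreover have "wdeg A k = Min ?W \<longleftrightarrow> (\<forall>w\<in>?W. wdeg A k \<le> w)"
      using W Min_le by (metis Min_eqI)
    ultimately show ?thesis
      using True by (simp add: phi_def main_form_def wvals_def)
  qed (simp add: phi_def main_form_def)
qed

lemma supp2_phi_one:
  "finite (supp2 c) \<Longrightarrow> supp2 (phi c A 1) = {k \<in> supp2 c. \<forall>k'\<in>supp2 c. wdeg A k \<le> wdeg A k'}"
  unfolding phi_one_eq_main_form by (auto simp: main_form_def supp2_def)

lemma wdeg_swap: "wdeg A (prod.swap k) = wdeg (prod.swap A) k"
  by (simp add: wdeg_def add.commute)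

lemma supp2_swap: "supp2 (c \<circ> prod.swap) = prod.swap ` supp2 c"
  by (force simp: supp2_def)

lemma peval_swap [simp]: "peval (c \<circ> prod.swap) x y = peval c y x"
  unfolding peval_def supp2_swap
  by (subst sum.reindex) (auto simp: mult_ac)

lemma main_form_swap: "main_form (c \<circ> prod.swap) A = main_form c (prod.swap A) \<circ> prod.swap"
  by (force simp: main_form_def supp2_swap wdeg_swap[symmetric])


section \<open>Quasi-homogeneous expansion\<close>

lemma peval_quasi_scaled:
  "peval c (\<xi> * lam ^ fst A) (\<eta> * lam ^ snd A) =
     (\<Sum>k\<in>supp2 c. c k * \<xi> ^ fst k * \<eta> ^ snd k * lam ^ wdeg A k)"
  unfolding peval_def wdeg_def
  by (intro sum.cong refl) (simp add: power_mult_distrib power_add mult.commute flip: power_mult)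

lemma sum_level_eq_phi:
  assumes "1 \<le> i" "i \<le> card (wvals c A)"
  shows "(\<Sum>k | k \<in> supp2 c \<and> wdeg A k = sorted_list_of_set (wvals c A) ! (i - 1).
            c k * \<xi> ^ fst k * \<eta> ^ snd k * lam ^ wdeg A k)
         = lam ^ (sorted_list_of_set (wvals c A) ! (i - 1)) * peval (phi c A i) \<xi> \<eta>"
  by (simp add: peval_phi[OF assms] sum_distrib_left mult.commute)

lemma peval_quasi_scaled_split:
  assumes fin: "finite (supp2 c)" and i: "1 \<le> i" "i \<le> card (wvals c A)"
  defines "B \<equiv> sorted_list_of_set (wvals c A) ! (i - 1)"
  shows "peval c (\<xi> * lam ^ fst A) (\<eta> * lam ^ snd A)
      = (\<Sum>k | k \<in> supp2 c \<and> wdeg A k < B. c k * \<xi> ^ fst k * \<eta> ^ snd k * lam ^ wdeg A k)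
        + lam ^ B * peval (phi c A i) \<xi> \<eta>
        + (\<Sum>k | k \<in> supp2 c \<and> B < wdeg A k. c k * \<xi> ^ fst k * \<eta> ^ snd k * lam ^ wdeg A k)"
proof -
  let ?f = "\<lambda>k. c k * \<xi> ^ fst k * \<eta> ^ snd k * lam ^ wdeg A k"
  let ?S = "supp2 c"
  have "sum ?f ?S = sum ?f ({k \<in> ?S. wdeg A k < B} \<union> ({k \<in> ?S. wdeg A k = B} \<union> {k \<in> ?S. B < wdeg A k}))"
    by (rule arg_cong[of _ _ "sum ?f"]) auto
  also have "\<dots> = sum ?f {k \<in> ?S. wdeg A k < B} + sum ?f {k \<in> ?S. wdeg A k = B} + sum ?f {k \<in> ?S. B < wdeg A k}"
    using fin by (subst sum.union_disjoint; auto simp: sum.union_disjoint add.assoc)+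
  finally show ?thesis
    unfolding peval_quasi_scaled using sum_level_eq_phi[OF i] by (simp add: B_def)
qed

lemma sum_below_level_nonneg:
  assumes fin: "finite (supp2 c)" and i0: "1 \<le> i0" "i0 \<le> card (wvals c A)"
    and lower: "\<And>i. 1 \<le> i \<Longrightarrow> i < i0 \<Longrightarrow> 0 \<le> peval (phi c A i) \<xi> \<eta>" and "0 < lam"
  shows "0 \<le> (\<Sum>k | k \<in> supp2 c \<and> wdeg A k < sorted_list_of_set (wvals c A) ! (i0 - 1).
                 c k * \<xi> ^ fst k * \<eta> ^ snd k * lam ^ wdeg A k)"
proof -
  let ?W = "wvals c A" and ?L = "sorted_list_of_set (wvals c A)"
  let ?f = "\<lambda>k. c k * \<xi> ^ fst k * \<eta> ^ snd k * lam ^ wdeg A k"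
  let ?S = "{k. k \<in> supp2 c \<and> wdeg A k < ?L ! (i0 - 1)}"
  have fW: "finite ?W"
    using fin by (simp add: wvals_def)
  have "sum ?f ?S = (\<Sum>b | b \<in> ?W \<and> b < ?L ! (i0 - 1). \<Sum>k | k \<in> ?S \<and> wdeg A k = b. ?f k)"
    by (rule sum.group[symmetric]) (use fin fW in \<open>auto simp: wvals_def\<close>)
  also have "\<dots> \<ge> 0"
  proof (rule sum_nonneg)
    fix b assume b: "b \<in> {b. b \<in> ?W \<and> b < ?L ! (i0 - 1)}"
    then have S_b: "{k. k \<in> ?S \<and> wdeg A k = b} = {k. k \<in> supp2 c \<and> wdeg A k = b}"
      by auto
    obtain j where j: "j < card ?W" "?L ! j = b"
      using b fW by (metis in_set_conv_nth length_sorted_list_of_set mem_Collect_eq set_sorted_list_of_set)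
    have "j < i0 - 1"
    proof (rule ccontr)
      assume "\<not> j < i0 - 1"
      then have "?L ! (i0 - 1) \<le> ?L ! j"
        using j by (intro sorted_nth_mono) auto
      then show False
        using b j by simp
    qed
    then show "0 \<le> (\<Sum>k | k \<in> ?S \<and> wdeg A k = b. ?f k)"
      unfolding S_b
      using sum_level_eq_phi[of "Suc j" c A] lower[of "Suc j"] j i0 \<open>0 < lam\<close> by simp
  qed
  finally show ?thesis .
qed

lemma abs_sum_above_level_le:
  fixes c :: "nat \<times> nat \<Rightarrow> real"
  assumes "finite S" "0 < lam" "lam \<le> 1" "\<bar>\<xi>\<bar> \<le> K" "\<bar>\<eta>\<bar> \<le> K"
  shows "\<bar>\<Sum>k | k \<in> S \<and> B < wdeg A k. c k * \<xi> ^ fst k * \<eta> ^ snd k * lam ^ wdeg A k\<bar>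
           \<le> (\<Sum>k\<in>S. \<bar>c k\<bar> * K ^ fst k * K ^ snd k) * lam ^ Suc B"
proof -
  have "\<bar>\<Sum>k | k \<in> S \<and> B < wdeg A k. c k * \<xi> ^ fst k * \<eta> ^ snd k * lam ^ wdeg A k\<bar>
      \<le> (\<Sum>k | k \<in> S \<and> B < wdeg A k. \<bar>c k\<bar> * K ^ fst k * K ^ snd k * lam ^ Suc B)"
  proof (rule order_trans[OF sum_abs sum_mono])
    fix k assume "k \<in> {k. k \<in> S \<and> B < wdeg A k}"
    then have "lam ^ wdeg A k \<le> lam ^ Suc B"
      using assms by (intro power_decreasing) auto
    moreover have "\<bar>\<xi> ^ fst k\<bar> \<le> K ^ fst k" "\<bar>\<eta> ^ snd k\<bar> \<le> K ^ snd k"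
      using assms by (simp_all add: power_abs power_mono)
    ultimately show "\<bar>c k * \<xi> ^ fst k * \<eta> ^ snd k * lam ^ wdeg A k\<bar>
        \<le> \<bar>c k\<bar> * K ^ fst k * K ^ snd k * lam ^ Suc B"
      unfolding abs_mult using assms
      by (intro mult_mono) (auto simp: zero_le_mult_iff)
  qed
  also have "\<dots> \<le> (\<Sum>k\<in>S. \<bar>c k\<bar> * K ^ fst k * K ^ snd k * lam ^ Suc B)"
    using assms by (intro sum_mono2) (auto simp: zero_le_mult_iff)
  finally show ?thesis
    by (simp add: sum_distrib_right)
qed

lemma eventually_peval_quasi_scaled_pos:
  assumes fin: "finite (supp2 c)" and i0: "1 \<le> i0"
    and lower: "\<And>i x y. 1 \<le> i \<Longrightarrow> i < i0 \<Longrightarrow> 0 \<le> peval (phi c A i) x y"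
    and lam: "\<And>n. 0 < lam n" "lam \<longlonglongrightarrow> 0" and bdd: "Bseq \<xi>" "Bseq \<eta>"
    and "0 < \<delta>" and ev: "eventually (\<lambda>n. \<delta> \<le> peval (phi c A i0) (\<xi> n) (\<eta> n)) sequentially"
  shows "eventually (\<lambda>n. 0 < peval c (\<xi> n * lam n ^ fst A) (\<eta> n * lam n ^ snd A)) sequentially"
proof -
  have i0_le: "i0 \<le> card (wvals c A)"
    using ev \<open>0 < \<delta>\<close> by (cases "i0 \<le> card (wvals c A)") (auto simp: phi_eq_zero)
  obtain K1 K2 where K12: "\<And>n. \<bar>\<xi> n\<bar> \<le> K1" "\<And>n. \<bar>\<eta> n\<bar> \<le> K2"
    using bdd by (metis BseqE real_norm_def less_eq_real_def)
  define K where "K = max K1 K2"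
  have K: "\<bar>\<xi> n\<bar> \<le> K" "\<bar>\<eta> n\<bar> \<le> K" for n
    using K12[of n] unfolding K_def by linarith+
  define B where "B = sorted_list_of_set (wvals c A) ! (i0 - 1)"
  define M where "M = (\<Sum>k\<in>supp2 c. \<bar>c k\<bar> * K ^ fst k * K ^ snd k)"
  have "0 \<le> M"
    using K(1)[of 0] by (simp add: M_def sum_nonneg)
  then have "eventually (\<lambda>n. lam n < min 1 (\<delta> / (M + 1))) sequentially"
    using lam \<open>0 < \<delta>\<close> by (intro order_tendstoD) auto
  with ev show ?thesis
  proof eventually_elim
    case (elim n)
    let ?f = "\<lambda>k. c k * \<xi> n ^ fst k * \<eta> n ^ snd k * lam n ^ wdeg A k"
    have "lam n * M < \<delta>"
      using elim \<open>0 \<le> M\<close> lam(1)[of n] by (simp add: pos_less_divide_eq algebra_simps)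
    then have "0 < lam n ^ B * \<delta> - M * lam n ^ Suc B"
      using lam(1)[of n] by (simp add: algebra_simps)
    moreover have "lam n ^ B * \<delta> \<le> lam n ^ B * peval (phi c A i0) (\<xi> n) (\<eta> n)"
      using elim lam(1)[of n] by simp
    moreover have "0 \<le> (\<Sum>k | k \<in> supp2 c \<and> wdeg A k < B. ?f k)"
      unfolding B_def using lower lam(1)[of n] by (intro sum_below_level_nonneg fin i0 i0_le)
    moreover have "\<bar>\<Sum>k | k \<in> supp2 c \<and> B < wdeg A k. ?f k\<bar> \<le> M * lam n ^ Suc B"
      unfolding M_def using K elim lam(1)[of n] by (intro abs_sum_above_level_le fin) auto
    ultimately show ?case
      unfolding peval_quasi_scaled_split[OF fin i0 i0_le] B_def[symmetric] by linarith
  qed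
qed


section \<open>Exposed vertices of the Newton polygon\<close>

definition exposes :: "nat \<times> nat \<Rightarrow> (nat \<times> nat \<Rightarrow> real) \<Rightarrow> nat \<times> nat \<Rightarrow> bool" where
  "exposes A c v \<longleftrightarrow> v \<in> supp2 c \<and> (\<forall>k\<in>supp2 c. k \<noteq> v \<longrightarrow> wdeg A v < wdeg A k)"

lemma main_form_exposed:
  assumes "exposes A c v"
  shows "main_form c A = (\<lambda>k. if k = v then c v else 0)"
proof
  fix k
  have "k \<in> supp2 c \<and> (\<forall>k'\<in>supp2 c. wdeg A k \<le> wdeg A k') \<longleftrightarrow> k = v"
    using assms unfolding exposes_def by (metis leD less_imp_le order_refl)
  then show "main_form c A k = (if k = v then c v else 0)"
    by (auto simp: main_form_def)
qed

lemma peval_main_form_exposed: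
  assumes "exposes A c v"
  shows "peval (main_form c A) x y = c v * x ^ fst v * y ^ snd v"
proof -
  have "supp2 (main_form c A) = {v}"
    using assms by (auto simp: main_form_exposed supp2_def exposes_def)
  then show ?thesis
    by (simp add: peval_def main_form_exposed[OF assms])
qed

text \<open>With \<open>N > snd v\<close>, the weight \<open>\<langle>(N A\<^sub>1, N A\<^sub>2 + 1), k\<rangle> = N \<langle>A, k\<rangle> + snd k\<close> orders the support
  first by \<open>\<langle>A, \<cdot>\<rangle>\<close> and then by the second exponent.\<close>

lemma exposes_tiebreak:
  assumes v: "v \<in> supp2 c"
    and min: "\<And>k. k \<in> supp2 c \<Longrightarrow> wdeg A v \<le> wdeg A k"
    and tie: "\<And>k. k \<in> supp2 c \<Longrightarrow> k \<noteq> v \<Longrightarrow> wdeg A k = wdeg A v \<Longrightarrow> snd v < snd k"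
  shows "exposes (Suc (snd v) * fst A, Suc (snd v) * snd A + 1) c v"
proof -
  let ?N = "Suc (snd v)"
  have wdeg_eq: "wdeg (?N * fst A, ?N * snd A + 1) k = ?N * wdeg A k + snd k" for k
    by (simp add: wdeg_def algebra_simps)
  show ?thesis
    unfolding exposes_def wdeg_eq
  proof (intro conjI ballI impI v)
    fix k assume k: "k \<in> supp2 c" "k \<noteq> v"
    show "?N * wdeg A v + snd v < ?N * wdeg A k + snd k"
    proof (cases "wdeg A k = wdeg A v")
      case True
      then show ?thesis
        using tie k by simp
    next
      case False
      then have "?N * Suc (wdeg A v) \<le> ?N * wdeg A k"
        using min[OF k(1)] by (intro mult_le_mono2) simp
      then show ?thesis
        by simp
    qed
  qed
qed

lemma obtain_wdeg_min_least_snd: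
  assumes "finite S" "S \<noteq> {}" "1 \<le> fst A"
  obtains v where "v \<in> S" "\<And>k. k \<in> S \<Longrightarrow> wdeg A v \<le> wdeg A k"
    "\<And>k. k \<in> S \<Longrightarrow> k \<noteq> v \<Longrightarrow> wdeg A k = wdeg A v \<Longrightarrow> snd v < snd k"
proof -
  define F where "F = {k \<in> S. wdeg A k = Min (wdeg A ` S)}"
  have "Min (wdeg A ` S) \<in> wdeg A ` S"
    using assms by (intro Min_in) auto
  then have F: "finite F" "F \<noteq> {}"
    using assms(1) by (fastforce simp: F_def)+
  have "Min (snd ` F) \<in> snd ` F"
    using F by (intro Min_in) auto
  then obtain v where v: "v \<in> F" "snd v = Min (snd ` F)"
    by auto
  show thesis
  proof (rule that)
    show "v \<in> S" "\<And>k. k \<in> S \<Longrightarrow> wdeg A v \<le> wdeg A k"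
      using v(1) assms(1) by (auto simp: F_def)
    fix k assume k: "k \<in> S" "k \<noteq> v" "wdeg A k = wdeg A v"
    then have "k \<in> F"
      using v(1) by (simp add: F_def)
    then have "snd v \<le> snd k"
      using v(2) F(1) by simp
    moreover have "snd v \<noteq> snd k"
    proof
      assume "snd v = snd k"
      then have "fst A * fst k = fst A * fst v"
        using k(3) by (simp add: wdeg_def)
      then show False
        using \<open>snd v = snd k\<close> k(2) assms(3) by (simp add: prod_eq_iff)
    qed
    ultimately show "snd v < snd k"
      by simp
  qed
qed

lemma exposes_lowest_on_y_axis:
  assumes "finite (supp2 c)" "k \<in> supp2 c" "fst k = 0"
  obtains m where "exposes (Suc m, 1) c (0, m)"
proof -
  define m where "m = Min (snd ` {k \<in> supp2 c. fst k = 0})"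
  have "snd k \<in> snd ` {k \<in> supp2 c. fst k = 0}"
    using assms(2,3) by blast
  then have "m \<in> snd ` {k \<in> supp2 c. fst k = 0}"
    unfolding m_def using assms(1) by (intro Min_in) auto
  then have m: "(0, m) \<in> supp2 c"
    by auto
  have least: "m \<le> snd k" if "k \<in> supp2 c" "fst k = 0" for k
    unfolding m_def using assms(1) that by (intro Min_le) auto
  have "exposes (Suc m, 1) c (0, m)"
    unfolding exposes_def
  proof (intro conjI m ballI impI)
    fix k assume k: "k \<in> supp2 c" "k \<noteq> (0, m)"
    show "wdeg (Suc m, 1) (0, m) < wdeg (Suc m, 1) k"
    proof (cases "fst k = 0")
      case True
      then show ?thesis
        using least[OF k(1)] k(2) by (cases k) (auto simp: wdeg_def)
    next
      case False
      then have "Suc m \<le> Suc m * fst k"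
        using mult_le_mono2[of 1 "fst k" "Suc m"] by simp
      then show ?thesis
        by (simp add: wdeg_def)
    qed
  qed
  then show thesis
    by (rule that)
qed

text \<open>Along a sequence \<open>|x\<^sub>n| = exp (- s\<^sub>n)\<close>, \<open>|y\<^sub>n| = exp (- t\<^sub>n)\<close>, limits of \<open>s\<^sub>n / (s\<^sub>n + t\<^sub>n)\<close>
  give real weights \<open>(\<omega>, 1 - \<omega>)\<close>.\<close>

definition rwdeg :: "real \<Rightarrow> nat \<times> nat \<Rightarrow> real" where
  "rwdeg \<omega> k = \<omega> * real (fst k) + (1 - \<omega>) * real (snd k)"

lemma rwdeg_rational_weight:
  assumes "0 < a1 + a2"
  shows "rwdeg (real a1 / real (a1 + a2)) k = real (wdeg (a1, a2) k) / real (a1 + a2)"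
proof -
  have "0 < real (a1 + a2)"
    using assms by (simp only: of_nat_0_less_iff)
  then have "1 - real a1 / real (a1 + a2) = real a2 / real (a1 + a2)"
    by (simp add: divide_simps del: of_nat_add)
  then show ?thesis
    by (simp add: rwdeg_def wdeg_def add_divide_distrib)
qed

lemma wdeg_floor_weight_ge:
  fixes N :: nat
  assumes "0 \<le> \<omega>" "\<omega> \<le> 1"
  defines "A \<equiv> (nat \<lfloor>real N * \<omega>\<rfloor> + 1, nat \<lfloor>real N * (1 - \<omega>)\<rfloor> + 1)"
  shows "real N * (rwdeg \<omega> k - rwdeg \<omega> v) - (\<bar>real (fst k) - real (fst v)\<bar> + \<bar>real (snd k) - real (snd v)\<bar>)
           \<le> real (wdeg A k) - real (wdeg A v)"
proof -
  define d1 d2 where "d1 = real (fst k) - real (fst v)" and "d2 = real (snd k) - real (snd v)"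
  define e1 e2 where "e1 = real (fst A) - real N * \<omega>" and "e2 = real (snd A) - real N * (1 - \<omega>)"
  have e: "0 < e1" "e1 \<le> 1" "0 < e2" "e2 \<le> 1"
    using assms(1,2) unfolding e1_def e2_def A_def by (simp_all add: of_nat_nat) linarith+
  have "real (wdeg A k) - real (wdeg A v) = real N * (rwdeg \<omega> k - rwdeg \<omega> v) + (e1 * d1 + e2 * d2)"
    by (simp add: wdeg_def rwdeg_def e1_def e2_def d1_def d2_def algebra_simps)
  moreover have "\<bar>e1 * d1\<bar> \<le> \<bar>d1\<bar>" "\<bar>e2 * d2\<bar> \<le> \<bar>d2\<bar>"
    using e by (simp_all add: abs_mult mult_left_le_one_le)
  ultimately show ?thesis
    unfolding d1_def d2_def by linarith
qed

lemma exposes_by_real_weight: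
  assumes fin: "finite (supp2 c)" and \<omega>: "0 \<le> \<omega>" "\<omega> \<le> 1" and v: "v \<in> supp2 c"
    and strict: "\<And>k. k \<in> supp2 c \<Longrightarrow> k \<noteq> v \<Longrightarrow> rwdeg \<omega> v < rwdeg \<omega> k"
  obtains A where "1 \<le> fst A" "1 \<le> snd A" "exposes A c v"
proof -
  define A where "A N = (nat \<lfloor>real N * \<omega>\<rfloor> + 1, nat \<lfloor>real N * (1 - \<omega>)\<rfloor> + 1)" for N
  have "eventually (\<lambda>N. wdeg (A N) v < wdeg (A N) k) sequentially" if k: "k \<in> supp2 c - {v}" for k
  proof -
    define C where "C = \<bar>real (fst k) - real (fst v)\<bar> + \<bar>real (snd k) - real (snd v)\<bar>"
    have r: "0 < rwdeg \<omega> k - rwdeg \<omega> v"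
      using strict k by simp
    have "eventually (\<lambda>N. C / (rwdeg \<omega> k - rwdeg \<omega> v) < real N) sequentially"
      using filterlim_real_sequentially by (simp add: filterlim_at_top_dense)
    then show ?thesis
    proof eventually_elim
      case (elim N)
      then have "0 < real N * (rwdeg \<omega> k - rwdeg \<omega> v) - C"
        using r by (simp add: pos_divide_less_eq)
      also have "\<dots> \<le> real (wdeg (A N) k) - real (wdeg (A N) v)"
        unfolding C_def A_def by (rule wdeg_floor_weight_ge[OF \<omega>])
      finally show ?case
        by simp
    qed
  qed
  then have "eventually (\<lambda>N. \<forall>k\<in>supp2 c - {v}. wdeg (A N) v < wdeg (A N) k) sequentially"
    using fin by (simp add: eventually_ball_finite)
  then obtain N where "\<forall>k\<in>supp2 c - {v}. wdeg (A N) v < wdeg (A N) k"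
    using eventually_happens'[OF sequentially_bot] by blast
  then show thesis
    using v by (intro that[of "A N"]) (auto simp: A_def exposes_def)
qed

lemma rwdeg_tie_rational:
  assumes \<omega>: "0 \<le> \<omega>" "\<omega> \<le> 1" and "k \<noteq> v" and tie: "rwdeg \<omega> k = rwdeg \<omega> v"
  obtains a1 a2 :: nat where "coprime a1 a2" "0 < a1 + a2" "\<omega> = real a1 / real (a1 + a2)"
proof -
  define d1 d2 where "d1 = int (fst k) - int (fst v)" and "d2 = int (snd k) - int (snd v)"
  have eq: "\<omega> * of_int (d1 - d2) = of_int (- d2)"
    using tie by (simp add: rwdeg_def d1_def d2_def algebra_simps)
  have "d1 \<noteq> d2"
  proof
    assume "d1 = d2"
    then have "d1 = 0" "d2 = 0"
      using eq by simp_all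
    with \<open>k \<noteq> v\<close> show False
      by (simp add: d1_def d2_def prod_eq_iff)
  qed
  then have "\<omega> = of_int (- d2) / of_int (d1 - d2)"
    using eq by (simp add: field_simps)
  then have "\<omega> \<in> \<rat>"
    by simp
  then obtain a b :: int where ab: "0 < b" "coprime a b" "\<omega> = of_int a / of_int b"
    by (rule Rats_cases')
  have "0 \<le> a" "a \<le> b"
    using \<omega> ab by (simp_all add: zero_le_divide_iff divide_le_eq_1)
  have "coprime a (b - a)"
    using ab(2) coprime_imp_coprime zdvd_zdiffD by blast
  show thesis
  proof (rule that[of "nat a" "nat (b - a)"])
    show "coprime (nat a) (nat (b - a))"
      using \<open>coprime a (b - a)\<close> \<open>0 \<le> a\<close> \<open>a \<le> b\<close> by (simp add: coprime_int_iff[symmetric])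
    show "0 < nat a + nat (b - a)" "\<omega> = real (nat a) / real (nat a + nat (b - a))"
      using ab \<open>0 \<le> a\<close> \<open>a \<le> b\<close> by auto
  qed
qed


section \<open>Dominant monomials along sequences\<close>

definition log_scale :: "(nat \<Rightarrow> real) \<Rightarrow> (nat \<Rightarrow> real) \<Rightarrow> bool" where
  "log_scale x s \<longleftrightarrow> (\<forall>n. \<bar>x n\<bar> = exp (- s n) \<and> 0 < s n) \<and> filterlim s at_top sequentially"

lemma log_scaleD:
  assumes "log_scale x s"
  shows "\<bar>x n\<bar> = exp (- s n)" "0 < s n" "filterlim s at_top sequentially"
  using assms by (simp_all add: log_scale_def)

lemma log_scale_subseq:
  "log_scale x s \<Longrightarrow> strict_mono r \<Longrightarrow> log_scale (\<lambda>n. x (r n)) (\<lambda>n. s (r n))"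
  unfolding log_scale_def using filterlim_compose[OF _ filterlim_subseq] by (auto simp: o_def)

lemma log_scale_minus_ln:
  assumes "x \<longlonglongrightarrow> 0" "\<And>n. x n \<noteq> 0" "\<And>n. \<bar>x n\<bar> < 1"
  shows "log_scale x (\<lambda>n. - ln \<bar>x n\<bar>)"
proof -
  have "filterlim (\<lambda>n. \<bar>x n\<bar>) (at_right 0) sequentially"
    unfolding filterlim_at using tendsto_rabs_zero[OF assms(1)] assms(2) by auto
  then have "filterlim (\<lambda>n. ln \<bar>x n\<bar>) at_bot sequentially"
    by (rule filterlim_compose[OF ln_at_0])
  then show ?thesis
    using assms(2,3) by (simp add: log_scale_def filterlim_uminus_at_bot ln_less_zero)
qed

lemma log_scale_unbounded: "log_scale x s \<Longrightarrow> \<exists>n. C < s n"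
  unfolding log_scale_def filterlim_at_top_dense
  using eventually_happens'[OF sequentially_bot] by blast

lemma log_scale_gap_at_top_imp_pos:
  assumes "log_scale x s" and "filterlim (\<lambda>n. real a1 * t n - real a2 * s n) at_top sequentially"
  shows "1 \<le> a1"
proof (rule ccontr)
  assume "\<not> 1 \<le> a1"
  obtain n where "0 < real a1 * t n - real a2 * s n"
    using assms(2) eventually_happens'[OF sequentially_bot] unfolding filterlim_at_top_dense by blast
  moreover have "0 \<le> real a2 * s n"
    using log_scaleD(2)[OF assms(1), of n] by simp
  moreover have "a1 = 0"
    using \<open>\<not> 1 \<le> a1\<close> by simp
  ultimately show False
    by simp
qed

lemma bounded_gap_imp_pos:
  assumes sx: "log_scale x s" and ty: "log_scale y t" and "coprime a1 a2"
    and gap: "\<And>n. \<bar>real a1 * t n - real a2 * s n\<bar> \<le> C"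
  shows "1 \<le> a1 \<and> 1 \<le> a2"
proof (rule ccontr)
  assume "\<not> (1 \<le> a1 \<and> 1 \<le> a2)"
  then have "a1 = 0 \<and> a2 = 1 \<or> a1 = 1 \<and> a2 = 0"
    using \<open>coprime a1 a2\<close> by (auto simp: not_le)
  then have "(\<forall>n. s n \<le> C) \<or> (\<forall>n. t n \<le> C)"
    using gap by (auto intro: abs_le_D1)
  then show False
    using log_scale_unbounded[OF sx, of C] log_scale_unbounded[OF ty, of C] by (auto simp: not_less[symmetric])
qed

lemma log_scale_rescaled:
  assumes sx: "log_scale x s" and ty: "log_scale y t" and "1 \<le> a1"
  defines "lam \<equiv> \<lambda>n. exp (- (s n / real a1))"
  shows "lam \<longlonglongrightarrow> 0" and "\<bar>x n / lam n ^ a1\<bar> = 1"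
    and "\<bar>y n / lam n ^ a2\<bar> = exp ((real a2 * s n - real a1 * t n) / real a1)"
proof -
  have "filterlim (\<lambda>n. 1 / real a1 * s n) at_top sequentially"
    using log_scaleD(3)[OF sx] \<open>1 \<le> a1\<close> by (intro filterlim_tendsto_pos_mult_at_top[OF tendsto_const]) auto
  then show "lam \<longlonglongrightarrow> 0"
    unfolding lam_def by (intro filterlim_compose[OF exp_at_bot]) (simp add: filterlim_uminus_at_bot)
  have lam_pow: "lam n ^ k = exp (- (real k * s n / real a1))" for k
    unfolding lam_def by (simp flip: exp_of_nat_mult)
  show "\<bar>x n / lam n ^ a1\<bar> = 1"
    using log_scaleD(1)[OF sx] \<open>1 \<le> a1\<close> by (simp add: abs_divide lam_pow)
  show "\<bar>y n / lam n ^ a2\<bar> = exp ((real a2 * s n - real a1 * t n) / real a1)"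
    using log_scaleD(1)[OF ty] \<open>1 \<le> a1\<close> by (simp add: abs_divide lam_pow flip: exp_diff)
      (simp add: field_simps)
qed

lemma obtain_nonzero_limits:
  fixes \<xi> \<eta> :: "nat \<Rightarrow> real"
  assumes "\<And>n. \<bar>\<xi> n\<bar> = 1" "\<And>n. e \<le> \<bar>\<eta> n\<bar>" "\<And>n. \<bar>\<eta> n\<bar> \<le> E" "0 < e"
  obtains a b and r :: "nat \<Rightarrow> nat"
  where "strict_mono r" "(\<lambda>n. \<xi> (r n)) \<longlonglongrightarrow> a" "(\<lambda>n. \<eta> (r n)) \<longlonglongrightarrow> b" "a \<noteq> 0" "b \<noteq> 0"
proof -
  define K where "K = {-1, 1::real} \<times> ({-E..-e} \<union> {e..E})"
  have "compact K"
    unfolding K_def by (intro compact_Times compact_Un compact_Icc finite_imp_compact) simp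
  moreover have "\<forall>n. (\<xi> n, \<eta> n) \<in> K"
  proof
    fix n
    have "\<xi> n \<in> {-1, 1}"
      using assms(1)[of n] by (cases "0 \<le> \<xi> n") auto
    moreover have "\<eta> n \<in> {-E..-e} \<union> {e..E}"
      using assms(2,3)[of n] by (cases "0 \<le> \<eta> n") auto
    ultimately show "(\<xi> n, \<eta> n) \<in> K"
      by (simp add: K_def)
  qed
  ultimately obtain l and r :: "nat \<Rightarrow> nat" where l: "l \<in> K" "strict_mono r" "((\<lambda>n. (\<xi> n, \<eta> n)) \<circ> r) \<longlonglongrightarrow> l"
    by (rule seq_compactE[OF compact_imp_seq_compact])
  show thesis
  proof (rule that[OF l(2)])
    show "(\<lambda>n. \<xi> (r n)) \<longlonglongrightarrow> fst l" "(\<lambda>n. \<eta> (r n)) \<longlonglongrightarrow> snd l"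
      using tendsto_fst[OF l(3)] tendsto_snd[OF l(3)] by (simp_all add: o_def)
    show "fst l \<noteq> 0" "snd l \<noteq> 0"
      using l(1) \<open>0 < e\<close> by (auto simp: K_def)
  qed
qed

lemma frequently_sequentially_subseq:
  "frequently P sequentially \<Longrightarrow> \<exists>r::nat \<Rightarrow> nat. strict_mono r \<and> (\<forall>n. P (r n))"
  using not_eventually_sequentiallyD[of "\<lambda>n. \<not> P n"] by (simp add: frequently_def)

lemma filterlim_exponent_gap_at_top:
  assumes sx: "log_scale x s" and ty: "log_scale y t"
    and dir: "(\<lambda>n. s n / (s n + t n)) \<longlonglongrightarrow> \<omega>" and gap: "rwdeg \<omega> v < rwdeg \<omega> k"
  shows "filterlim (\<lambda>n. (real (fst k) - real (fst v)) * s n + (real (snd k) - real (snd v)) * t n)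
           at_top sequentially"
proof -
  define d1 d2 where "d1 = real (fst k) - real (fst v)" and "d2 = real (snd k) - real (snd v)"
  define q where "q n = s n / (s n + t n)" for n
  have eq: "d1 * s n + d2 * t n = (q n * d1 + (1 - q n) * d2) * (s n + t n)" for n
  proof -
    have qs: "q n * (s n + t n) = s n"
      using log_scaleD(2)[OF sx, of n] log_scaleD(2)[OF ty, of n] by (simp add: q_def)
    then have qt: "(1 - q n) * (s n + t n) = t n"
      by (simp add: algebra_simps)
    have "(q n * d1 + (1 - q n) * d2) * (s n + t n) = d1 * (q n * (s n + t n)) + d2 * ((1 - q n) * (s n + t n))"
      by (simp add: algebra_simps)
    then show ?thesis
      by (simp only: qs qt)
  qed
  have "(\<lambda>n. q n * d1 + (1 - q n) * d2) \<longlonglongrightarrow> \<omega> * d1 + (1 - \<omega>) * d2"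
    using dir unfolding q_def by (intro tendsto_intros)
  moreover have "0 < \<omega> * d1 + (1 - \<omega>) * d2"
    using gap by (simp add: rwdeg_def d1_def d2_def algebra_simps)
  moreover have "filterlim (\<lambda>n. s n + t n) at_top sequentially"
    using log_scaleD(3)[OF sx] log_scaleD(3)[OF ty] by (rule filterlim_at_top_add_at_top)
  ultimately have "filterlim (\<lambda>n. (q n * d1 + (1 - q n) * d2) * (s n + t n)) at_top sequentially"
    by (rule filterlim_tendsto_pos_mult_at_top)
  then have "filterlim (\<lambda>n. d1 * s n + d2 * t n) at_top sequentially"
    by (simp only: eq)
  then show ?thesis
    by (simp add: d1_def d2_def)
qed

lemma filterlim_exponent_gap_on_edge:
  assumes "1 \<le> a1" and edge: "wdeg (a1, a2) k = wdeg (a1, a2) v" "snd v < snd k"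
    and D: "filterlim (\<lambda>n. real a1 * t n - real a2 * s n) at_top sequentially"
  shows "filterlim (\<lambda>n. (real (fst k) - real (fst v)) * s n + (real (snd k) - real (snd v)) * t n)
           at_top sequentially"
proof -
  have e: "real a1 * (real (fst k) - real (fst v)) = - (real a2 * (real (snd k) - real (snd v)))"
    using edge(1) by (simp add: wdeg_def algebra_simps flip: of_nat_mult of_nat_add)
  have eq: "(real (fst k) - real (fst v)) * s n + (real (snd k) - real (snd v)) * t n
      = (real (snd k) - real (snd v)) / real a1 * (real a1 * t n - real a2 * s n)" for n
  proof -
    have "real a1 * ((real (fst k) - real (fst v)) * s n + (real (snd k) - real (snd v)) * t n)
        = real a1 * (real (fst k) - real (fst v)) * s n + real a1 * (real (snd k) - real (snd v)) * t n"
      by (simp add: algebra_simps)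
    also have "\<dots> = (real (snd k) - real (snd v)) * (real a1 * t n - real a2 * s n)"
      unfolding e by (simp add: algebra_simps)
    finally show ?thesis
      using \<open>1 \<le> a1\<close> by (simp add: field_simps)
  qed
  have "0 < (real (snd k) - real (snd v)) / real a1"
    using edge(2) \<open>1 \<le> a1\<close> by simp
  then have "filterlim (\<lambda>n. (real (snd k) - real (snd v)) / real a1 * (real a1 * t n - real a2 * s n))
      at_top sequentially"
    by (rule filterlim_tendsto_pos_mult_at_top[OF tendsto_const _ D])
  then show ?thesis
    by (simp only: eq)
qed

lemma sum_pos_if_dominant_term:
  fixes f :: "'a \<Rightarrow> real"
  assumes "finite S" "v \<in> S" "(\<Sum>k\<in>S - {v}. \<bar>f k\<bar>) < f v"
  shows "0 < sum f S"
proof -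
  have "- (\<Sum>k\<in>S - {v}. \<bar>f k\<bar>) \<le> (\<Sum>k\<in>S - {v}. f k)"
    using sum_abs[of f "S - {v}"] by linarith
  then show ?thesis
    using assms by (simp add: sum.remove)
qed

lemma abs_monomial_ratio:
  assumes "\<bar>x\<bar> = exp (- s)" "\<bar>y\<bar> = exp (- t)"
  shows "\<bar>x ^ fst k * y ^ snd k\<bar>
    = exp (- ((real (fst k) - real (fst v)) * s + (real (snd k) - real (snd v)) * t)) * \<bar>x ^ fst v * y ^ snd v\<bar>"
proof -
  have "\<bar>x ^ fst k * y ^ snd k\<bar> = exp (- (real (fst k) * s + real (snd k) * t))" for k
  proof -
    have "\<bar>x ^ fst k * y ^ snd k\<bar> = exp (- s) ^ fst k * exp (- t) ^ snd k"
      by (simp add: abs_mult power_abs assms)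
    then show ?thesis
      by (simp only: exp_of_nat_mult[symmetric] exp_add[symmetric]) (simp add: algebra_simps)
  qed
  then show ?thesis
    by (simp add: algebra_simps flip: exp_add)
qed

lemma eventually_peval_pos_at_dominant_vertex:
  assumes fin: "finite (supp2 c)" and v: "v \<in> supp2 c"
    and pos: "\<And>n. 0 < c v * x n ^ fst v * y n ^ snd v"
    and sx: "\<And>n. \<bar>x n\<bar> = exp (- s n)" and ty: "\<And>n. \<bar>y n\<bar> = exp (- t n)"
    and lim: "\<And>k. k \<in> supp2 c \<Longrightarrow> k \<noteq> v \<Longrightarrow>
      filterlim (\<lambda>n. (real (fst k) - real (fst v)) * s n + (real (snd k) - real (snd v)) * t n) at_top sequentially"
  shows "eventually (\<lambda>n. 0 < peval c (x n) (y n)) sequentially"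
proof -
  define X where "X k n = (real (fst k) - real (fst v)) * s n + (real (snd k) - real (snd v)) * t n" for k n
  define m where "m k n = c k * x n ^ fst k * y n ^ snd k" for k n
  have ratio: "\<bar>m k n\<bar> = \<bar>c k\<bar> / \<bar>c v\<bar> * exp (- X k n) * m v n" for k n
  proof -
    have "m v n = \<bar>m v n\<bar>"
      using pos[of n] by (simp add: m_def)
    also have "\<dots> = \<bar>c v\<bar> * \<bar>x n ^ fst v * y n ^ snd v\<bar>"
      by (simp add: m_def abs_mult mult.assoc)
    finally have "m v n = \<bar>c v\<bar> * \<bar>x n ^ fst v * y n ^ snd v\<bar>" .
    moreover have "c v \<noteq> 0"
      using v by (simp add: supp2_def)
    ultimately show ?thesis
      unfolding X_def using abs_monomial_ratio[OF sx ty, where k = k and v = v]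
      by (simp add: m_def abs_mult mult.assoc)
  qed
  define R where "R n = (\<Sum>k\<in>supp2 c - {v}. \<bar>c k\<bar> / \<bar>c v\<bar> * exp (- X k n))" for n
  have "R \<longlonglongrightarrow> 0"
    unfolding R_def
  proof (intro tendsto_null_sum)
    fix k assume "k \<in> supp2 c - {v}"
    then have "filterlim (\<lambda>n. - X k n) at_bot sequentially"
      using lim unfolding X_def by (simp add: filterlim_uminus_at_top)
    then have "(\<lambda>n. exp (- X k n)) \<longlonglongrightarrow> 0"
      by (rule filterlim_compose[OF exp_at_bot])
    then show "(\<lambda>n. \<bar>c k\<bar> / \<bar>c v\<bar> * exp (- X k n)) \<longlonglongrightarrow> 0"
      by (rule tendsto_mult_right_zero)
  qed
  then have "eventually (\<lambda>n. R n < 1) sequentially"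
    by (rule order_tendstoD) simp
  then show ?thesis
  proof eventually_elim
    case (elim n)
    have "(\<Sum>k\<in>supp2 c - {v}. \<bar>m k n\<bar>) = R n * m v n"
      by (simp add: R_def ratio sum_distrib_right)
    also have "\<dots> < m v n"
      using mult_strict_right_mono[OF elim pos[of n]] by (simp add: m_def)
    finally show ?case
      unfolding peval_def using sum_pos_if_dominant_term[OF fin v, of "\<lambda>k. m k n"] by (simp add: m_def)
  qed
qed


section \<open>Polynomials with nonnegative main forms\<close>

locale nonneg_main_forms =
  fixes c :: "nat \<times> nat \<Rightarrow> real"
  assumes finite_supp: "finite (supp2 c)"
    and main_form_nonneg: "1 \<le> fst A \<Longrightarrow> 1 \<le> snd A \<Longrightarrow> 0 \<le> peval (main_form c A) x y"
begin

lemma swap: "nonneg_main_forms (c \<circ> prod.swap)"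
  by unfold_locales (auto simp: supp2_swap finite_supp main_form_swap main_form_nonneg)

lemma phi_one_nonneg: "1 \<le> fst A \<Longrightarrow> 1 \<le> snd A \<Longrightarrow> 0 \<le> peval (phi c A 1) x y"
  unfolding phi_one_eq_main_form[OF finite_supp] by (rule main_form_nonneg)

lemma exposed_monomial_pos:
  assumes "exposes A c v" "1 \<le> fst A" "1 \<le> snd A" "x \<noteq> 0" "y \<noteq> 0"
  shows "0 < c v * x ^ fst v * y ^ snd v"
proof -
  have "0 \<le> c v * x ^ fst v * y ^ snd v"
    using main_form_nonneg[OF assms(2,3)] by (simp add: peval_main_form_exposed[OF assms(1)])
  moreover have "c v * x ^ fst v * y ^ snd v \<noteq> 0"
    using assms(1,4,5) by (simp add: exposes_def supp2_def)
  ultimately show ?thesis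
    by linarith
qed

lemma exposed_vertex_not_negative:
  assumes "exposes A c v" "1 \<le> fst A" "1 \<le> snd A" and sx: "log_scale x s" and ty: "log_scale y t"
    and lim: "\<And>k. k \<in> supp2 c \<Longrightarrow> k \<noteq> v \<Longrightarrow>
      filterlim (\<lambda>n. (real (fst k) - real (fst v)) * s n + (real (snd k) - real (snd v)) * t n) at_top sequentially"
    and neg: "\<And>n. peval c (x n) (y n) < 0"
  shows False
proof -
  have "x n \<noteq> 0" "y n \<noteq> 0" for n
    using log_scaleD(1)[OF sx, of n] log_scaleD(1)[OF ty, of n] by auto
  then have "0 < c v * x n ^ fst v * y n ^ snd v" for n
    using exposed_monomial_pos assms(1-3) by blast
  then have "eventually (\<lambda>n. 0 < peval c (x n) (y n)) sequentially"
    using assms(1) log_scaleD(1)[OF sx] log_scaleD(1)[OF ty] lim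
    by (intro eventually_peval_pos_at_dominant_vertex[OF finite_supp]) (auto simp: exposes_def)
  then obtain n where "0 < peval c (x n) (y n)"
    using eventually_happens'[OF sequentially_bot] by blast
  with neg[of n] show False
    by simp
qed

lemma face_vertex_not_negative:
  assumes sx: "log_scale x s" and ty: "log_scale y t"
    and dir: "(\<lambda>n. s n / (s n + t n)) \<longlonglongrightarrow> real a1 / real (a1 + a2)" and "0 < a1 + a2"
    and D: "filterlim (\<lambda>n. real a1 * t n - real a2 * s n) at_top sequentially"
    and neg: "\<And>n. peval c (x n) (y n) < 0"
  shows False
proof -
  have "1 \<le> a1"
    by (rule log_scale_gap_at_top_imp_pos[OF sx D])
  have "supp2 c \<noteq> {}"
    using neg[of 0] by (auto simp: peval_def)
  then obtain v where v: "v \<in> supp2 c" "\<And>k. k \<in> supp2 c \<Longrightarrow> wdeg (a1, a2) v \<le> wdeg (a1, a2) k"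
    "\<And>k. k \<in> supp2 c \<Longrightarrow> k \<noteq> v \<Longrightarrow> wdeg (a1, a2) k = wdeg (a1, a2) v \<Longrightarrow> snd v < snd k"
    using obtain_wdeg_min_least_snd[OF finite_supp _ , of "(a1, a2)"] \<open>1 \<le> a1\<close> by auto
  have lim: "filterlim (\<lambda>n. (real (fst k) - real (fst v)) * s n + (real (snd k) - real (snd v)) * t n)
      at_top sequentially" if k: "k \<in> supp2 c" "k \<noteq> v" for k
  proof (cases "wdeg (a1, a2) k = wdeg (a1, a2) v")
    case True
    show ?thesis
      by (rule filterlim_exponent_gap_on_edge[OF \<open>1 \<le> a1\<close> True v(3)[OF k True] D])
  next
    case False
    then have "wdeg (a1, a2) v < wdeg (a1, a2) k"
      using v(2)[OF k(1)] by simp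
    then have "rwdeg (real a1 / real (a1 + a2)) v < rwdeg (real a1 / real (a1 + a2)) k"
      unfolding rwdeg_rational_weight[OF \<open>0 < a1 + a2\<close>] using \<open>0 < a1 + a2\<close>
      by (intro divide_strict_right_mono) (simp_all only: of_nat_less_iff of_nat_0_less_iff)
    then show ?thesis
      by (rule filterlim_exponent_gap_at_top[OF sx ty dir])
  qed
  have "exposes (Suc (snd v) * a1, Suc (snd v) * a2 + 1) c v"
    using exposes_tiebreak[of v c "(a1, a2)"] v unfolding fst_conv snd_conv by blast
  then show False
    using \<open>1 \<le> a1\<close> by (intro exposed_vertex_not_negative[OF _ _ _ sx ty lim neg]) auto
qed

lemma face_vertex_not_negative_mirror:
  assumes sx: "log_scale x s" and ty: "log_scale y t"
    and dir: "(\<lambda>n. s n / (s n + t n)) \<longlonglongrightarrow> real a1 / real (a1 + a2)" and "0 < a1 + a2"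
    and D: "filterlim (\<lambda>n. real a2 * s n - real a1 * t n) at_top sequentially"
    and neg: "\<And>n. peval c (x n) (y n) < 0"
  shows False
proof -
  interpret swapped: nonneg_main_forms "c \<circ> prod.swap"
    by (rule swap)
  have "(\<lambda>n. 1 - s n / (s n + t n)) \<longlonglongrightarrow> 1 - real a1 / real (a1 + a2)"
    by (rule tendsto_diff[OF tendsto_const dir])
  moreover have "1 - s n / (s n + t n) = t n / (t n + s n)" for n
  proof -
    have "s n + t n \<noteq> 0"
      using log_scaleD(2)[OF sx, of n] log_scaleD(2)[OF ty, of n] by simp
    then show ?thesis
      by (simp add: field_simps add.commute)
  qed
  moreover have "1 - real a1 / real (a1 + a2) = real a2 / real (a2 + a1)"
  proof -
    have "0 < real (a1 + a2)"
      using \<open>0 < a1 + a2\<close> by (simp only: of_nat_0_less_iff)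
    then show ?thesis
      by (simp add: divide_simps add.commute del: of_nat_add)
  qed
  ultimately have "(\<lambda>n. t n / (t n + s n)) \<longlonglongrightarrow> real a2 / real (a2 + a1)"
    by simp
  then show False
    using swapped.face_vertex_not_negative[OF ty sx] \<open>0 < a1 + a2\<close> D neg by auto
qed

lemma unbounded_gap_not_negative:
  assumes sx: "log_scale x s" and ty: "log_scale y t" and "0 < a1 + a2"
    and dir: "(\<lambda>n. s n / (s n + t n)) \<longlonglongrightarrow> real a1 / real (a1 + a2)"
    and D: "filterlim (\<lambda>n. \<bar>real a1 * t n - real a2 * s n\<bar>) at_top sequentially"
    and neg: "\<And>n. peval c (x n) (y n) < 0"
  shows False
proof (cases "frequently (\<lambda>n. 0 < real a1 * t n - real a2 * s n) sequentially")
  case True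
  then obtain r :: "nat \<Rightarrow> nat" where r: "strict_mono r" "\<And>n. 0 < real a1 * t (r n) - real a2 * s (r n)"
    using frequently_sequentially_subseq[OF True] by blast
  have "filterlim (\<lambda>n. \<bar>real a1 * t (r n) - real a2 * s (r n)\<bar>) at_top sequentially"
    using filterlim_compose[OF D filterlim_subseq[OF r(1)]] by (simp add: o_def)
  then have "filterlim (\<lambda>n. real a1 * t (r n) - real a2 * s (r n)) at_top sequentially"
    using r(2) by (simp add: abs_of_pos)
  moreover have "(\<lambda>n. s (r n) / (s (r n) + t (r n))) \<longlonglongrightarrow> real a1 / real (a1 + a2)"
    using LIMSEQ_subseq_LIMSEQ[OF dir r(1)] by (simp add: o_def)
  ultimately show False
    using face_vertex_not_negative[OF log_scale_subseq[OF sx r(1)] log_scale_subseq[OF ty r(1)]]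
      \<open>0 < a1 + a2\<close> neg by blast
next
  case False
  then have "eventually (\<lambda>n. \<bar>real a1 * t n - real a2 * s n\<bar> = real a2 * s n - real a1 * t n) sequentially"
    by (simp add: not_frequently not_less eventually_mono)
  then have "filterlim (\<lambda>n. real a2 * s n - real a1 * t n) at_top sequentially"
    using D by (rule filterlim_cong[OF refl refl, THEN iffD1])
  then show False
    using face_vertex_not_negative_mirror[OF sx ty dir \<open>0 < a1 + a2\<close>] neg by blast
qed

lemma y_axis_not_negative:
  assumes y: "y \<longlonglongrightarrow> 0" "\<And>n. y n \<noteq> 0" and neg: "\<And>n. peval c 0 (y n) < 0"
  shows False
proof -
  have "\<exists>k\<in>supp2 c. fst k = 0"
  proof (rule ccontr)
    assume "\<not> ?thesis"
    then have "peval c 0 (y 0) = 0"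
      unfolding peval_def by (intro sum.neutral) auto
    with neg[of 0] show False
      by simp
  qed
  then obtain m where exposed: "exposes (Suc m, 1) c (0, m)"
    using exposes_lowest_on_y_axis[OF finite_supp] by blast
  have "c (0, m) * sgn (y n) ^ m = \<bar>c (0, m)\<bar>" for n
  proof -
    have "0 < c (0, m) * sgn (y n) ^ m"
      using exposed_monomial_pos[OF exposed, of 1 "sgn (y n)"] y(2) by (simp add: sgn_eq_0_iff)
    moreover have "\<bar>c (0, m) * sgn (y n) ^ m\<bar> = \<bar>c (0, m)\<bar>"
      using y(2) by (simp add: abs_mult power_abs abs_sgn_eq)
    ultimately show ?thesis
      by (metis abs_of_pos)
  qed
  then have "peval (phi c (Suc m, 1) 1) 0 (sgn (y n)) = \<bar>c (0, m)\<bar>" for n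
    unfolding phi_one_eq_main_form[OF finite_supp] peval_main_form_exposed[OF exposed] by simp
  moreover have "0 < \<bar>c (0, m)\<bar>"
    using exposed by (simp add: exposes_def supp2_def)
  ultimately have "eventually (\<lambda>n. 0 < peval c (0 * \<bar>y n\<bar> ^ fst (Suc m, 1::nat))
      (sgn (y n) * \<bar>y n\<bar> ^ snd (Suc m, 1::nat))) sequentially"
    using tendsto_rabs_zero[OF y(1)] y(2)
    by (intro eventually_peval_quasi_scaled_pos[OF finite_supp order_refl, where \<delta> = "\<bar>c (0, m)\<bar>"])
      (auto intro: BseqI'[of _ 1] simp: norm_sgn)
  then obtain n where "0 < peval c 0 (y n)"
    using eventually_happens'[OF sequentially_bot] by (auto simp: sgn_mult_abs)
  with neg[of n] show False
    by simp
qed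

lemma x_axis_not_negative:
  assumes "x \<longlonglongrightarrow> 0" and "\<And>n. x n \<noteq> 0" and "\<And>n. peval c (x n) 0 < 0"
  shows False
proof -
  interpret swapped: nonneg_main_forms "c \<circ> prod.swap"
    by (rule swap)
  show False
    by (rule swapped.y_axis_not_negative[of x]) (use assms in auto)
qed

end


section \<open>The main face and its characteristic polynomial\<close>

lemma lattice_points_same_wdeg:
  assumes "coprime a1 a2" "1 \<le> a2" "wdeg (a1, a2) k = wdeg (a1, a2) v" "fst k \<le> fst v"
  obtains j where "fst v = fst k + a2 * j" "snd k = snd v + a1 * j"
proof -
  have e: "a1 * (fst v - fst k) + a2 * snd v = a2 * snd k"
    using assms(3,4) by (simp add: wdeg_def diff_mult_distrib2)
  then have "a2 * snd v \<le> a2 * snd k"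
    by (metis le_add2)
  then have "snd v \<le> snd k"
    using assms(2) by simp
  then have e': "a1 * (fst v - fst k) = a2 * (snd k - snd v)"
    using e by (simp add: diff_mult_distrib2)
  then have "a2 dvd fst v - fst k"
    using assms(1) by (metis coprime_commute coprime_dvd_mult_right_iff dvd_triv_left)
  then obtain j where j: "fst v - fst k = a2 * j" ..
  then have "snd k - snd v = a1 * j"
    using e' assms(2) by (simp add: mult.left_commute)
  then show thesis
    using j assms(4) \<open>snd v \<le> snd k\<close> by (intro that[of j]) auto
qed

context
  fixes c :: "nat \<times> nat \<Rightarrow> real" and A v :: "nat \<times> nat"
  assumes fin: "finite (supp2 c)"
    and A: "coprime (fst A) (snd A)" "1 \<le> fst A" "1 \<le> snd A"
    and v: "v \<in> supp2 (phi c A 1)" "fst v = Max (fst ` supp2 (phi c A 1))"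
begin

lemma main_face_wdeg_min: "k \<in> supp2 c \<Longrightarrow> wdeg A v \<le> wdeg A k"
  using v(1) unfolding supp2_phi_one[OF fin] by simp

lemma main_face_param:
  assumes "k \<in> supp2 (phi c A 1)"
  shows "fst v = fst k + snd A * ((fst v - fst k) div snd A)"
    and "snd k = snd v + fst A * ((fst v - fst k) div snd A)"
proof -
  have "wdeg A k = wdeg A v"
    using assms v(1) unfolding supp2_phi_one[OF fin] by (auto intro: antisym)
  moreover have "fst k \<le> fst v"
    using assms v(2) fin unfolding supp2_phi_one[OF fin] by simp
  ultimately obtain j where j: "fst v = fst k + snd A * j" "snd k = snd v + fst A * j"
    using lattice_points_same_wdeg[of "fst A" "snd A" k v] A by auto
  moreover have "(fst v - fst k) div snd A = j"
    using j(1) A(3) by simp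
  ultimately show "fst v = fst k + snd A * ((fst v - fst k) div snd A)"
    and "snd k = snd v + fst A * ((fst v - fst k) div snd A)"
    by simp_all
qed

lemma main_face_param_eq_0_iff:
  "k \<in> supp2 (phi c A 1) \<Longrightarrow> (fst v - fst k) div snd A = 0 \<longleftrightarrow> k = v"
  using main_face_param[of k] by (auto simp: prod_eq_iff)

lemma main_face_tie:
  assumes "k \<in> supp2 c" "k \<noteq> v" "wdeg A k = wdeg A v"
  shows "snd v < snd k"
proof -
  have k: "k \<in> supp2 (phi c A 1)"
    using assms main_face_wdeg_min v(1) unfolding supp2_phi_one[OF fin] by auto
  then have "(fst v - fst k) div snd A \<noteq> 0"
    using main_face_param_eq_0_iff assms(2) by blast
  then show ?thesis
    using main_face_param(2)[OF k] A(2) by simp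
qed

lemma char_poly_main_face:
  "char_poly c A u = (\<Sum>k\<in>supp2 (phi c A 1). c k * u ^ ((fst v - fst k) div snd A))"
  unfolding char_poly_def Let_def v(2)[symmetric] by (intro sum.cong refl) (simp add: phi_on_supp2)

lemma char_poly_zero: "char_poly c A 0 = c v"
proof -
  have "char_poly c A 0 = (\<Sum>k\<in>supp2 (phi c A 1). if k = v then c v else 0)"
    using main_face_param_eq_0_iff unfolding char_poly_main_face by (intro sum.cong refl) auto
  also have "\<dots> = c v"
    using v(1) fin unfolding supp2_phi_one[OF fin] by simp
  finally show ?thesis .
qed

lemma peval_phi_one_char_poly:
  assumes "x \<noteq> 0"
  shows "peval (phi c A 1) x y = x ^ fst v * y ^ snd v * char_poly c A (y ^ fst A / x ^ snd A)"
proof -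
  have "c k * x ^ fst k * y ^ snd k
      = x ^ fst v * y ^ snd v * (c k * (y ^ fst A / x ^ snd A) ^ ((fst v - fst k) div snd A))"
    if k: "k \<in> supp2 (phi c A 1)" for k
  proof -
    let ?j = "(fst v - fst k) div snd A"
    have "x ^ fst v * y ^ snd v * (c k * (y ^ fst A / x ^ snd A) ^ ?j)
        = x ^ fst k * (x ^ snd A) ^ ?j * y ^ snd v * (c k * ((y ^ fst A) ^ ?j / (x ^ snd A) ^ ?j))"
      by (subst (1) main_face_param(1)[OF k]) (simp add: power_add power_mult power_divide)
    also have "\<dots> = c k * x ^ fst k * (y ^ snd v * (y ^ fst A) ^ ?j)"
      using assms by (simp add: field_simps)
    also have "\<dots> = c k * x ^ fst k * y ^ snd k"
      using main_face_param(2)[OF k] by (simp add: power_add power_mult)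
    finally show ?thesis ..
  qed
  then show ?thesis
    unfolding char_poly_main_face peval_def sum_distrib_left by (intro sum.cong refl) (simp add: phi_on_supp2)
qed

lemma char_poly_binomial:
  assumes "card (supp2 (phi c A 1)) \<le> 2"
  obtains b m where "1 \<le> m" "\<And>u. char_poly c A u = c v + b * u ^ m"
proof -
  let ?F = "supp2 (phi c A 1)" and ?j = "\<lambda>k. (fst v - fst k) div snd A"
  have fF: "finite ?F"
    using fin unfolding supp2_phi_one[OF fin] by simp
  show thesis
  proof (cases "?F = {v}")
    case True
    then show thesis
      using that[of 1 0] by (simp add: char_poly_main_face)
  next
    case False
    then obtain w where w: "w \<in> ?F" "w \<noteq> v"
      using v(1) by blast
    have sub: "{v, w} \<subseteq> ?F"
      using v(1) w by auto
    have "card {v, w} \<le> card ?F"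
      using fF sub by (rule card_mono)
    then have "card {v, w} = card ?F"
      using w(2) assms by simp
    then have "?F = {v, w}"
      using card_subset_eq[OF fF sub] by simp
    moreover have "1 \<le> ?j w"
      using main_face_param_eq_0_iff[OF w(1)] w(2) by simp
    ultimately show thesis
      using that[of "?j w" "c w"] main_face_param_eq_0_iff v(1) w by (simp add: char_poly_main_face)
  qed
qed

end

lemma exists_power_quotient_eq:
  fixes u :: real
  assumes "coprime a1 a2" "u \<noteq> 0"
  obtains x y :: real where "x \<noteq> 0" "y \<noteq> 0" "y ^ a1 / x ^ a2 = u"
proof (cases "odd a1")
  case True
  then show ?thesis
    using that[of 1 "root a1 u"] odd_real_root_pow[OF True] assms(2) by (simp add: odd_pos)
next
  case False
  then have "odd a2"
    using assms(1) by auto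
  then show ?thesis
    using that[of "root a2 (1 / u)" 1] odd_real_root_pow[OF \<open>odd a2\<close>] assms(2) by (simp add: odd_pos)
qed

lemma binomial_nonneg_no_root:
  fixes a b :: real
  assumes "0 < a" "1 \<le> m" "\<And>u. 0 \<le> a + b * u ^ m"
  shows "a + b * u ^ m \<noteq> 0"
proof
  assume "a + b * u ^ m = 0"
  then have bu: "b * u ^ m = - a"
    by simp
  have "a + b * (2 * u) ^ m = a + 2 ^ m * (b * u ^ m)"
    by (simp add: power_mult_distrib mult_ac)
  also have "\<dots> = a * (1 - 2 ^ m)"
    unfolding bu by (simp add: algebra_simps)
  also have "\<dots> < 0"
    using assms(1,2) by (simp add: mult_pos_neg)
  finally show False
    using assms(3)[of "2 * u"] by simp
qed

context nonneg_main_forms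
begin

lemma obtain_main_face_vertex:
  assumes "supp2 c \<noteq> {}" and A: "coprime (fst A) (snd A)" "1 \<le> fst A" "1 \<le> snd A"
  obtains v where "v \<in> supp2 (phi c A 1)" "fst v = Max (fst ` supp2 (phi c A 1))" "0 < c v"
    "\<And>x y :: real. x \<noteq> 0 \<Longrightarrow> y \<noteq> 0 \<Longrightarrow> 0 < x ^ fst v * y ^ snd v"
proof -
  let ?F = "supp2 (phi c A 1)"
  have "Min (wdeg A ` supp2 c) \<in> wdeg A ` supp2 c"
    using assms(1) finite_supp by (intro Min_in) auto
  then obtain k0 where "k0 \<in> supp2 c" "wdeg A k0 = Min (wdeg A ` supp2 c)"
    by auto
  then have "k0 \<in> ?F" "finite ?F"
    using finite_supp unfolding supp2_phi_one[OF finite_supp] by auto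
  then have "Max (fst ` ?F) \<in> fst ` ?F"
    by (intro Max_in) auto
  then obtain v where v: "v \<in> ?F" "fst v = Max (fst ` ?F)"
    by auto
  have "exposes (Suc (snd v) * fst A, Suc (snd v) * snd A + 1) c v"
    using v(1) main_face_wdeg_min[OF finite_supp A v] main_face_tie[OF finite_supp A v]
    unfolding supp2_phi_one[OF finite_supp] by (intro exposes_tiebreak) auto
  then have mono: "0 < c v * x ^ fst v * y ^ snd v" if "x \<noteq> 0" "y \<noteq> 0" for x y
    by (rule exposed_monomial_pos) (use A(2) that in simp_all)
  have "0 < c v"
    using mono[of 1 1] by simp
  moreover have "0 < x ^ fst v * y ^ snd v" if "x \<noteq> 0" "y \<noteq> 0" for x y :: real
    using mono[OF that] \<open>0 < c v\<close> by (simp add: zero_less_mult_iff mult.assoc)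
  ultimately show thesis
    by (rule that[OF v])
qed

lemma in_calA_if_phi_one_root:
  assumes "supp2 c \<noteq> {}" and "A \<in> N0sq"
    and root: "peval (phi c A 1) \<xi> \<eta> = 0" "\<xi> \<noteq> 0" "\<eta> \<noteq> 0"
  shows "A \<in> calA c"
proof -
  have A: "coprime (fst A) (snd A)" "1 \<le> fst A" "1 \<le> snd A"
    using \<open>A \<in> N0sq\<close> by (simp_all add: N0sq_def)
  obtain v where v: "v \<in> supp2 (phi c A 1)" "fst v = Max (fst ` supp2 (phi c A 1))"
    and "0 < c v" and mono: "\<And>x y :: real. x \<noteq> 0 \<Longrightarrow> y \<noteq> 0 \<Longrightarrow> 0 < x ^ fst v * y ^ snd v"
    using obtain_main_face_vertex[OF assms(1) A] by metis
  note factor = peval_phi_one_char_poly[OF finite_supp A v]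
  have nonneg: "0 \<le> char_poly c A u" for u
  proof (cases "u = 0")
    case True
    then show ?thesis
      using char_poly_zero[OF finite_supp A v] \<open>0 < c v\<close> by simp
  next
    case False
    then obtain x y where xy: "x \<noteq> 0" "y \<noteq> 0" "y ^ fst A / x ^ snd A = u"
      using exists_power_quotient_eq A(1) by blast
    then have "0 \<le> x ^ fst v * y ^ snd v * char_poly c A u"
      using phi_one_nonneg[OF A(2,3), of x y] factor[OF xy(1)] by simp
    then show ?thesis
      using mono[OF xy(1,2)] by (simp add: zero_le_mult_iff)
  qed
  have root': "char_poly c A (\<eta> ^ fst A / \<xi> ^ snd A) = 0"
    using factor[OF root(2), of \<eta>] root mono[OF root(2,3)] by simp
  have "3 \<le> card (supp2 (phi c A 1))"
  proof (rule ccontr)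
    assume "\<not> 3 \<le> card (supp2 (phi c A 1))"
    then have "card (supp2 (phi c A 1)) \<le> 2"
      by simp
    then obtain b m where "1 \<le> m" "\<And>u. char_poly c A u = c v + b * u ^ m"
      using char_poly_binomial[OF finite_supp A v] by blast
    then show False
      using binomial_nonneg_no_root[OF \<open>0 < c v\<close> \<open>1 \<le> m\<close>] nonneg root' by metis
  qed
  then show ?thesis
    using \<open>A \<in> N0sq\<close> nonneg root' by (auto simp: calA_def)
qed

end


section \<open>The conditions (C2) and (C2~)\<close>

locale nonneg_main_forms_C2 = nonneg_main_forms +
  assumes C2_or_C2tilde: "A \<in> calA c \<Longrightarrow> C2 c A \<or> C2tilde c A"
begin

lemma obtain_positive_level:
  assumes "supp2 c \<noteq> {}" "A \<in> N0sq" "a \<noteq> 0" "b \<noteq> 0"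
  obtains i0 where "1 \<le> i0" "\<And>i x y. 1 \<le> i \<Longrightarrow> i < i0 \<Longrightarrow> 0 \<le> peval (phi c A i) x y"
    "0 < peval (phi c A i0) a b"
proof -
  have A: "1 \<le> fst A" "1 \<le> snd A"
    using assms(2) by (simp_all add: N0sq_def)
  have below_2: "0 \<le> peval (phi c A i) x y" if "1 \<le> i" "i < 2" for i x y
    using that phi_one_nonneg[OF A] by (metis One_nat_def less_2_cases not_one_le_zero)
  consider "0 < peval (phi c A 1) a b" | "peval (phi c A 1) a b = 0" "0 < peval (phi c A 2) a b"
    | "peval (phi c A 1) a b = 0" "\<not> 0 < peval (phi c A 2) a b"
    using phi_one_nonneg[OF A, of a b] by fastforce
  then show thesis
  proof cases
    case 1
    then show thesis
      using that[of 1] by simp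
  next
    case 2
    then show thesis
      using that[of 2] below_2 by simp
  next
    case 3
    then have "A \<in> calA c"
      using in_calA_if_phi_one_root assms by blast
    moreover have "\<not> C2 c A"
      using 3 assms(3,4) unfolding C2_def by blast
    ultimately have "C2tilde c A"
      using C2_or_C2tilde by blast
    then have "peval (phi c A 2) a b = 0"
      using 3(2) by (simp add: C2tilde_def not_less order_antisym)
    then have "0 < peval (phi c A 3) a b"
      using \<open>C2tilde c A\<close> 3(1) assms(3,4) by (simp add: C2tilde_def)
    moreover have "0 \<le> peval (phi c A i) x y" if "1 \<le> i" "i < 3" for i x y
      using below_2[of i x y] \<open>C2tilde c A\<close> that by (cases "i = 2") (auto simp: C2tilde_def)
    ultimately show thesis
      using that[of 3] by simp
  qed
qed

lemma quasi_curve_not_negative: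
  assumes "A \<in> N0sq" and lam: "\<And>n. 0 < lam n" "lam \<longlonglongrightarrow> 0"
    and \<xi>: "\<xi> \<longlonglongrightarrow> a" "a \<noteq> 0" and \<eta>: "\<eta> \<longlonglongrightarrow> b" "b \<noteq> 0"
    and neg: "\<And>n. peval c (\<xi> n * lam n ^ fst A) (\<eta> n * lam n ^ snd A) < 0"
  shows False
proof -
  have "supp2 c \<noteq> {}"
    using neg[of 0] by (auto simp: peval_def)
  then obtain i0 where i0: "1 \<le> i0" "\<And>i x y. 1 \<le> i \<Longrightarrow> i < i0 \<Longrightarrow> 0 \<le> peval (phi c A i) x y"
    "0 < peval (phi c A i0) a b"
    using obtain_positive_level \<open>A \<in> N0sq\<close> \<xi>(2) \<eta>(2) by metis
  have "eventually (\<lambda>n. peval (phi c A i0) a b / 2 < peval (phi c A i0) (\<xi> n) (\<eta> n)) sequentially"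
    using tendsto_peval[OF \<xi>(1) \<eta>(1)] i0(3) by (intro order_tendstoD) auto
  then have "eventually (\<lambda>n. 0 < peval c (\<xi> n * lam n ^ fst A) (\<eta> n * lam n ^ snd A)) sequentially"
    using i0(3) convergent_imp_Bseq[OF convergentI[OF \<xi>(1)]] convergent_imp_Bseq[OF convergentI[OF \<eta>(1)]]
    by (intro eventually_peval_quasi_scaled_pos[OF finite_supp i0(1,2) lam,
          where \<delta> = "peval (phi c A i0) a b / 2"]) (auto elim: eventually_mono)
  then obtain n where "0 < peval c (\<xi> n * lam n ^ fst A) (\<eta> n * lam n ^ snd A)"
    using eventually_happens'[OF sequentially_bot] by blast
  with neg[of n] show False
    by simp
qed

lemma bounded_gap_not_negative:
  assumes sx: "log_scale x s" and ty: "log_scale y t" and "coprime a1 a2"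
    and gap: "\<And>n. \<bar>real a1 * t n - real a2 * s n\<bar> \<le> C"
    and neg: "\<And>n. peval c (x n) (y n) < 0"
  shows False
proof -
  have "1 \<le> a1" "1 \<le> a2"
    using bounded_gap_imp_pos[OF sx ty \<open>coprime a1 a2\<close> gap] by simp_all
  define lam where "lam n = exp (- (s n / real a1))" for n
  define \<xi> \<eta> where "\<xi> n = x n / lam n ^ a1" and "\<eta> n = y n / lam n ^ a2" for n
  have abs_\<eta>: "\<bar>\<eta> n\<bar> = exp ((real a2 * s n - real a1 * t n) / real a1)" for n
    unfolding \<eta>_def lam_def by (rule log_scale_rescaled(3)[OF sx ty \<open>1 \<le> a1\<close>])
  have \<eta>_bounds: "exp (- C / real a1) \<le> \<bar>\<eta> n\<bar>" "\<bar>\<eta> n\<bar> \<le> exp (C / real a1)" for n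
  proof -
    have "- C \<le> real a2 * s n - real a1 * t n" "real a2 * s n - real a1 * t n \<le> C"
      using gap[of n] by (simp_all add: abs_le_iff)
    then have "- C / real a1 \<le> (real a2 * s n - real a1 * t n) / real a1"
      "(real a2 * s n - real a1 * t n) / real a1 \<le> C / real a1"
      by (intro divide_right_mono; simp)+
    then show "exp (- C / real a1) \<le> \<bar>\<eta> n\<bar>" "\<bar>\<eta> n\<bar> \<le> exp (C / real a1)"
      unfolding abs_\<eta> by simp_all
  qed
  have abs_\<xi>: "\<bar>\<xi> n\<bar> = 1" for n
    unfolding \<xi>_def lam_def by (rule log_scale_rescaled(2)[OF sx ty \<open>1 \<le> a1\<close>])
  obtain a b and r :: "nat \<Rightarrow> nat" where r: "strict_mono r"
    "(\<lambda>n. \<xi> (r n)) \<longlonglongrightarrow> a" "(\<lambda>n. \<eta> (r n)) \<longlonglongrightarrow> b" "a \<noteq> 0" "b \<noteq> 0"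
    by (rule obtain_nonzero_limits[OF abs_\<xi> \<eta>_bounds exp_gt_zero])
  show False
  proof (rule quasi_curve_not_negative[of "(a1, a2)" "lam \<circ> r", OF _ _ _ r(2,4,3,5)])
    show "(a1, a2) \<in> N0sq"
      using \<open>coprime a1 a2\<close> \<open>1 \<le> a1\<close> \<open>1 \<le> a2\<close> by (simp add: N0sq_def)
    show "(lam \<circ> r) \<longlonglongrightarrow> 0"
      using LIMSEQ_subseq_LIMSEQ[OF log_scale_rescaled(1)[OF sx ty \<open>1 \<le> a1\<close>] r(1)] unfolding lam_def[abs_def] .
    show "0 < (lam \<circ> r) n" for n
      by (simp add: lam_def)
    show "peval c (\<xi> (r n) * (lam \<circ> r) n ^ fst (a1, a2)) (\<eta> (r n) * (lam \<circ> r) n ^ snd (a1, a2)) < 0" for n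
      using neg[of "r n"] by (simp add: \<xi>_def \<eta>_def lam_def)
  qed
qed

lemma rational_direction_not_negative:
  assumes sx: "log_scale x s" and ty: "log_scale y t" and "coprime a1 a2" "0 < a1 + a2"
    and dir: "(\<lambda>n. s n / (s n + t n)) \<longlonglongrightarrow> real a1 / real (a1 + a2)"
    and neg: "\<And>n. peval c (x n) (y n) < 0"
  shows False
proof (cases "\<exists>C. frequently (\<lambda>n. \<bar>real a1 * t n - real a2 * s n\<bar> \<le> C) sequentially")
  case True
  then obtain C where C: "frequently (\<lambda>n. \<bar>real a1 * t n - real a2 * s n\<bar> \<le> C) sequentially"
    by blast
  obtain r :: "nat \<Rightarrow> nat" where r: "strict_mono r" "\<And>n. \<bar>real a1 * t (r n) - real a2 * s (r n)\<bar> \<le> C"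
    using frequently_sequentially_subseq[OF C] by blast
  show False
    by (rule bounded_gap_not_negative[OF log_scale_subseq[OF sx r(1)] log_scale_subseq[OF ty r(1)]
        \<open>coprime a1 a2\<close>]) (use r(2) neg in auto)
next
  case False
  then have "filterlim (\<lambda>n. \<bar>real a1 * t n - real a2 * s n\<bar>) at_top sequentially"
    by (simp add: filterlim_at_top_dense not_frequently not_le)
  then show False
    by (rule unbounded_gap_not_negative[OF sx ty \<open>0 < a1 + a2\<close> dir _ neg])
qed

lemma convergent_direction_not_negative:
  assumes sx: "log_scale x s" and ty: "log_scale y t"
    and dir: "(\<lambda>n. s n / (s n + t n)) \<longlonglongrightarrow> \<omega>" and \<omega>: "0 \<le> \<omega>" "\<omega> \<le> 1"
    and neg: "\<And>n. peval c (x n) (y n) < 0"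
  shows False
proof -
  have "supp2 c \<noteq> {}"
    using neg[of 0] by (auto simp: peval_def)
  then have "Min (rwdeg \<omega> ` supp2 c) \<in> rwdeg \<omega> ` supp2 c"
    using finite_supp by (intro Min_in) auto
  then obtain v where v: "v \<in> supp2 c" "rwdeg \<omega> v = Min (rwdeg \<omega> ` supp2 c)"
    by auto
  have v_min: "rwdeg \<omega> v \<le> rwdeg \<omega> k" if "k \<in> supp2 c" for k
    unfolding v(2) using finite_supp that by (intro Min_le) auto
  show False
  proof (cases "\<forall>k\<in>supp2 c. k \<noteq> v \<longrightarrow> rwdeg \<omega> v < rwdeg \<omega> k")
    case True
    then obtain A where A: "1 \<le> fst A" "1 \<le> snd A" "exposes A c v"
      using exposes_by_real_weight[OF finite_supp \<omega> v(1)] by blast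
    have lim: "filterlim (\<lambda>n. (real (fst k) - real (fst v)) * s n + (real (snd k) - real (snd v)) * t n)
        at_top sequentially" if "k \<in> supp2 c" "k \<noteq> v" for k
      using True that by (intro filterlim_exponent_gap_at_top[OF sx ty dir]) auto
    show False
      by (rule exposed_vertex_not_negative[OF A(3,1,2) sx ty lim neg])
  next
    case False
    then obtain k where k: "k \<in> supp2 c" "k \<noteq> v" "\<not> rwdeg \<omega> v < rwdeg \<omega> k"
      by blast
    then have "rwdeg \<omega> k = rwdeg \<omega> v"
      using v_min[OF k(1)] by simp
    then obtain a1 a2 where "coprime a1 a2" "0 < a1 + a2" "\<omega> = real a1 / real (a1 + a2)"
      using rwdeg_tie_rational[OF \<omega> k(2)] by metis
    then show False
      using rational_direction_not_negative[OF sx ty] dir neg by blast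
  qed
qed

lemma off_axis_not_negative:
  assumes x: "x \<longlonglongrightarrow> 0" "\<And>n. x n \<noteq> 0" and y: "y \<longlonglongrightarrow> 0" "\<And>n. y n \<noteq> 0"
    and neg: "\<And>n. peval c (x n) (y n) < 0"
  shows False
proof -
  have "eventually (\<lambda>n. \<bar>x n\<bar> < 1 \<and> \<bar>y n\<bar> < 1) sequentially"
    using tendsto_rabs_zero[OF x(1)] tendsto_rabs_zero[OF y(1)] by (intro eventually_conj order_tendstoD) auto
  then obtain N where "\<And>n. N \<le> n \<Longrightarrow> \<bar>x n\<bar> < 1 \<and> \<bar>y n\<bar> < 1"
    by (auto simp: eventually_sequentially)
  then have N: "\<bar>x (n + N)\<bar> < 1" "\<bar>y (n + N)\<bar> < 1" for n
    by simp_all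
  define s t where "s n = - ln \<bar>x (n + N)\<bar>" and "t n = - ln \<bar>y (n + N)\<bar>" for n
  have sx: "log_scale (\<lambda>n. x (n + N)) s" and ty: "log_scale (\<lambda>n. y (n + N)) t"
    unfolding s_def[abs_def] t_def[abs_def] using x y N
    by (simp_all add: log_scale_minus_ln LIMSEQ_ignore_initial_segment)
  have dir: "\<forall>n. s n / (s n + t n) \<in> {0..1}"
  proof
    fix n
    show "s n / (s n + t n) \<in> {0..1}"
      using log_scaleD(2)[OF sx, of n] log_scaleD(2)[OF ty, of n] by (simp add: divide_le_eq_1)
  qed
  then obtain \<omega> and r :: "nat \<Rightarrow> nat" where "\<omega> \<in> {0..1}" "strict_mono r"
    "((\<lambda>n. s n / (s n + t n)) \<circ> r) \<longlonglongrightarrow> \<omega>"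
    using seq_compactE[OF compact_imp_seq_compact[OF compact_Icc[of 0 1]] dir] by blast
  then show False
    using convergent_direction_not_negative[OF log_scale_subseq[OF sx] log_scale_subseq[OF ty]] neg
    by (auto simp: o_def)
qed

lemma not_negative_along_null_sequence:
  assumes "peval c 0 0 = 0" and x: "x \<longlonglongrightarrow> 0" and y: "y \<longlonglongrightarrow> 0"
    and neg: "\<And>n. peval c (x n) (y n) < 0"
  shows False
proof -
  have "frequently (\<lambda>n. x n = 0 \<or> y n = 0 \<or> x n \<noteq> 0 \<and> y n \<noteq> 0) sequentially"
    by (intro eventually_frequently[OF sequentially_bot] always_eventually) blast
  then consider (y_axis) "frequently (\<lambda>n. x n = 0) sequentially" | (x_axis) "frequently (\<lambda>n. y n = 0) sequentially"
    | (off_axis) "frequently (\<lambda>n. x n \<noteq> 0 \<and> y n \<noteq> 0) sequentially"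
    by (auto simp: frequently_disj_iff)
  then show False
  proof cases
    case y_axis
    then obtain r :: "nat \<Rightarrow> nat" where r: "strict_mono r" "\<And>n. x (r n) = 0"
      using frequently_sequentially_subseq by blast
    have "y (r n) \<noteq> 0" "peval c 0 (y (r n)) < 0" for n
      using neg[of "r n"] r(2)[of n] assms(1) by auto
    then show False
      using y_axis_not_negative LIMSEQ_subseq_LIMSEQ[OF y r(1)] by (auto simp: o_def)
  next
    case x_axis
    then obtain r :: "nat \<Rightarrow> nat" where r: "strict_mono r" "\<And>n. y (r n) = 0"
      using frequently_sequentially_subseq by blast
    have "x (r n) \<noteq> 0" "peval c (x (r n)) 0 < 0" for n
      using neg[of "r n"] r(2)[of n] assms(1) by auto
    then show False
      using x_axis_not_negative LIMSEQ_subseq_LIMSEQ[OF x r(1)] by (auto simp: o_def)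
  next
    case off_axis
    then obtain r :: "nat \<Rightarrow> nat" where r: "strict_mono r" "\<And>n. x (r n) \<noteq> 0 \<and> y (r n) \<noteq> 0"
      using frequently_sequentially_subseq by blast
    have lim: "(\<lambda>n. x (r n)) \<longlonglongrightarrow> 0" "(\<lambda>n. y (r n)) \<longlonglongrightarrow> 0"
      using LIMSEQ_subseq_LIMSEQ[OF x r(1)] LIMSEQ_subseq_LIMSEQ[OF y r(1)] by (simp_all add: o_def)
    show False
      by (rule off_axis_not_negative[OF lim(1) _ lim(2)]) (use r(2) neg in auto)
  qed
qed

end

theorem theorem4:
  fixes c :: "nat \<times> nat \<Rightarrow> real"
  assumes "is_bipoly c"
    and "peval c 0 0 = 0"
    and "((\<lambda>z. peval c (fst z) (snd z)) has_derivative (\<lambda>_. 0)) (at (0, 0))"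
    and "aff_dim (convex hull (supp_real c)) = 2"
    and "\<forall>A. fst A \<ge> 1 \<and> snd A \<ge> 1 \<longrightarrow> (\<forall>x y. peval (main_form c A) x y \<ge> 0)"
    and "calA c \<noteq> {}"
    and "\<forall>A\<in>calA c. C2 c A \<or> C2tilde c A"
  shows "\<forall>\<^sub>F z in nhds (0, 0). peval c (fst z) (snd z) \<ge> peval c 0 0"
proof -
  interpret nonneg_main_forms_C2 c
    using assms(1,5,7) by unfold_locales (auto simp: is_bipoly_finite_supp2)
  show ?thesis
    unfolding eventually_nhds_iff_sequentially
  proof (intro allI impI)
    fix f :: "nat \<Rightarrow> real \<times> real"
    assume "f \<longlonglongrightarrow> (0, 0)"
    show "eventually (\<lambda>n. peval c 0 0 \<le> peval c (fst (f n)) (snd (f n))) sequentially"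
    proof (rule ccontr)
      assume "\<not> ?thesis"
      then obtain r :: "nat \<Rightarrow> nat" where r: "strict_mono r"
        "\<And>n. \<not> peval c 0 0 \<le> peval c (fst (f (r n))) (snd (f (r n)))"
        using not_eventually_sequentiallyD by blast
      have "(f \<circ> r) \<longlonglongrightarrow> (0, 0)"
        using LIMSEQ_subseq_LIMSEQ[OF \<open>f \<longlonglongrightarrow> (0, 0)\<close> r(1)] .
      then have lim: "(\<lambda>n. fst (f (r n))) \<longlonglongrightarrow> 0" "(\<lambda>n. snd (f (r n))) \<longlonglongrightarrow> 0"
        using tendsto_fst tendsto_snd by (fastforce simp: o_def)+
      have "peval c (fst (f (r n))) (snd (f (r n))) < 0" for n
        using r(2)[of n] assms(2) by simp
      then show False
        by (rule not_negative_along_null_sequence[OF assms(2) lim])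
    qed
  qed
qed

end
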